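(* For $m\ge 2$, let $h_m^{+}$ and $h_m^{-}$ denote respectively the largest and the smallest number of matching coalescent histories of a species tree with $m$ leaves, the maximum and minimum being taken over all species trees with $m$ leaves, and let $R(m)=h_m^{+}/h_m^{-}$. Then for every odd $m\ge 7$, $$R(m)\ge\left(\frac{\sqrt{m-1}}{4\sqrt{e}}\right)^{m}.$$
   Context: A species tree is a rooted binary tree whose leaves carry distinct labels. Each node $v$ of a tree $t$ has a branch directly above it: for a non-root node this is the edge joining $v$ to its parent, and the root additionally has a root branch above it. A leaf $x$ descends from a branch if $x$ lies in the subtree below that branch. A branch $b'$ is descended from a branch $b$ if the node at the lower end of $b'$ lies in the subtree below $b$. Given a species tree $t$, a matching coalescent history of $t$ is a map $h$ from the set of internal nodes of $t$ to the set of branches of $t$ such that: (a) for every leaf $x$ and internal node $k$, if $x$ descends from $k$ then $x$ descends from the branch $h(k)$; (b) for all internal nodes $k_1,k_2$, if $k_2$ is a descendant of $k_1$ then $h(k_2)$ is descended from or coincides with $h(k_1)$. The number of matching coalescent histories depends only on the unlabeled shape of the tree. *)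

theory Defs
  imports Complex_Main "HOL-Library.FuncSet" "HOL-Library.Sublist"
begin

datatype 'a stree = Leaf 'a | Node "'a stree" "'a stree"

fun leaf_labels :: "'a stree \<Rightarrow> 'a list" where
  "leaf_labels (Leaf a) = [a]"
| "leaf_labels (Node l r) = leaf_labels l @ leaf_labels r"

definition nleaves :: "'a stree \<Rightarrow> nat" where
  "nleaves t = length (leaf_labels t)"

text \<open>Nodes are addressed by their path from the root (False = left, True = right).
  The branch above a node is identified with that node; the branch above the root is
  the root branch.  A node (or branch) q lies below the branch of node p iff p is a
  prefix of q.\<close>
fun positions :: "'a stree \<Rightarrow> bool list set" where
  "positions (Leaf a) = {[]}"
| "positions (Node l r) = insert [] (Cons False ` positions l \<union> Cons True ` positions r)"

fun internal_nodes :: "'a stree \<Rightarrow> bool list set" where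
  "internal_nodes (Leaf a) = {}"
| "internal_nodes (Node l r) =
     insert [] (Cons False ` internal_nodes l \<union> Cons True ` internal_nodes r)"

definition leaf_nodes :: "'a stree \<Rightarrow> bool list set" where
  "leaf_nodes t = positions t - internal_nodes t"

definition matching_histories :: "'a stree \<Rightarrow> (bool list \<Rightarrow> bool list) set" where
  "matching_histories t =
     {h \<in> internal_nodes t \<rightarrow>\<^sub>E positions t.
        (\<forall>x\<in>leaf_nodes t. \<forall>k\<in>internal_nodes t. prefix k x \<longrightarrow> prefix (h k) x) \<and>
        (\<forall>k1\<in>internal_nodes t. \<forall>k2\<in>internal_nodes t. prefix k1 k2 \<longrightarrow> prefix (h k1) (h k2))}"

definition num_mch :: "'a stree \<Rightarrow> nat" where
  "num_mch t = card (matching_histories t)"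

definition species_trees :: "nat \<Rightarrow> nat stree set" where
  "species_trees m = {t. nleaves t = m \<and> distinct (leaf_labels t)}"

definition h_plus :: "nat \<Rightarrow> nat" where
  "h_plus m = Max (num_mch ` species_trees m)"

definition h_minus :: "nat \<Rightarrow> nat" where
  "h_minus m = Min (num_mch ` species_trees m)"

definition R :: "nat \<Rightarrow> real" where
  "R m = real (h_plus m) / real (h_minus m)"

end

theory Submission
  imports Defs
begin

text \<open>A matching history sends every internal node k to a branch on the path from the root
  to k, so it is determined by the depths of these branches; counting the admissible depth
  assignments gives a recursion over subtrees.  For the caterpillar with 2k + 1 leaves the
  recursion produces the Catalan number binom(4k, 2k) / (2k + 1) <= 16^k / (2k + 1); for the
  caterpillar built from k cherries it dominates rising factorials, which gives at least
  (2k - 1)!! histories.  Hence R(2k + 1) >= (2k - 1)!! (2k + 1) / 16^k, and the Stirling-type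
  estimate 4k ((2k - 1)!!)^2 >= e^2 (2k / e)^(2k), proved by induction from
  (1 + 1/k)^(2k) <= e^2, turns this into the claimed bound.\<close>

lemma internal_nodes_subset_positions: "internal_nodes t \<subseteq> positions t"
  by (induction t) auto

lemma Nil_in_positions [simp]: "[] \<in> positions t"
  by (cases t) auto

lemma positions_prefix_closed: "p \<in> positions t \<Longrightarrow> prefix q p \<Longrightarrow> q \<in> positions t"
proof (induction t arbitrary: p q)
  case (Node l r)
  show ?case
  proof (cases q)
    case (Cons b q')
    with Node.prems obtain p' where "p = b # p'" "prefix q' p'"
      by (cases p) auto
    with Node Cons show ?thesis
      by (cases b) auto
  qed simp
qed simp

lemma children_in_positions: "k \<in> internal_nodes t \<Longrightarrow> k @ [b] \<in> positions t"
proof (induction t arbitrary: k)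
  case (Node l r)
  then show ?case
    by (cases b) auto
qed simp

lemma leaf_nodes_Node:
  "leaf_nodes (Node l r) = Cons False ` leaf_nodes l \<union> Cons True ` leaf_nodes r"
  unfolding leaf_nodes_def by auto

lemma position_below_leaf: "p \<in> positions t \<Longrightarrow> \<exists>x\<in>leaf_nodes t. prefix p x"
proof (induction t arbitrary: p)
  case (Leaf a)
  then show ?case by (simp add: leaf_nodes_def)
next
  case (Node l r)
  show ?case
  proof (cases p)
    case Nil
    from Node.IH(1)[of "[]"] obtain x where "x \<in> leaf_nodes l" by auto
    then have "False # x \<in> leaf_nodes (Node l r)" by (simp add: leaf_nodes_Node)
    with Nil show ?thesis by force
  next
    case (Cons b p')
    then have "p' \<in> positions (if b then r else l)"
      using Node.prems by (cases b) auto
    then obtain x where "x \<in> leaf_nodes (if b then r else l)" "prefix p' x"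
      using Node.IH by (cases b) auto
    moreover from this(1) have "b # x \<in> leaf_nodes (Node l r)"
      by (cases b) (auto simp: leaf_nodes_Node)
    moreover have "prefix p (b # x)"
      using Cons \<open>prefix p' x\<close> by simp
    ultimately show ?thesis by blast
  qed
qed

lemma common_prefix_of_sibling_extensions:
  assumes "prefix a x" "prefix (k @ [False]) x" "prefix a y" "prefix (k @ [True]) y"
  shows "prefix a k"
proof -
  have "\<not> prefix (k @ [False]) a"
  proof
    assume "prefix (k @ [False]) a"
    then have "prefix (k @ [False]) y" using assms(3) by (rule prefix_order.trans)
    with assms(4) show False using prefix_same_cases by fastforce
  qed
  moreover have "prefix a (k @ [False]) \<or> prefix (k @ [False]) a"
    using assms(1,2) by (rule prefix_same_cases)
  ultimately show ?thesis by auto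
qed

lemma history_below_node:
  assumes "h \<in> matching_histories t" "k \<in> internal_nodes t"
  shows "prefix (h k) k"
proof -
  obtain x y where x: "x \<in> leaf_nodes t" "prefix (k @ [False]) x"
    and y: "y \<in> leaf_nodes t" "prefix (k @ [True]) y"
    using position_below_leaf children_in_positions[OF assms(2)] by meson
  then have "prefix (h k) x" "prefix (h k) y"
    using assms unfolding matching_histories_def by (auto dest: append_prefixD)
  with x y show ?thesis
    by (blast intro: common_prefix_of_sibling_extensions)
qed

text \<open>By history_below_node a history is recorded by the depths length (h k).  The
  parameter a allows depths up to length k + a, as for t hanging below a path of a extra
  edges; this makes the count recursive in the two subtrees.\<close>

definition depth_maps :: "'a stree \<Rightarrow> nat \<Rightarrow> (bool list \<Rightarrow> nat) set" where
  "depth_maps t a = {d \<in> internal_nodes t \<rightarrow>\<^sub>E UNIV.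
     (\<forall>k\<in>internal_nodes t. d k \<le> length k + a) \<and>
     (\<forall>k1\<in>internal_nodes t. \<forall>k2\<in>internal_nodes t. prefix k1 k2 \<longrightarrow> d k1 \<le> d k2)}"

lemma history_depths_in_depth_maps:
  assumes "h \<in> matching_histories t"
  shows "restrict (\<lambda>k. length (h k)) (internal_nodes t) \<in> depth_maps t 0"
  using assms history_below_node[OF assms]
  unfolding matching_histories_def depth_maps_def by (auto simp: prefix_length_le)

lemma take_depths_in_histories:
  assumes "d \<in> depth_maps t 0"
  shows "restrict (\<lambda>k. take (d k) k) (internal_nodes t) \<in> matching_histories t"
proof -
  have bound: "d k \<le> length k" if "k \<in> internal_nodes t" for k
    using assms that unfolding depth_maps_def by auto
  have "prefix (take (d k1) k1) (take (d k2) k2)"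
    if "k1 \<in> internal_nodes t" "k2 \<in> internal_nodes t" "prefix k1 k2" for k1 k2
  proof -
    have "d k1 \<le> d k2"
      using assms that unfolding depth_maps_def by auto
    moreover have "take (d k1) k1 = take (d k1) k2"
      using bound[OF that(1)] \<open>prefix k1 k2\<close> by (auto simp: prefix_def)
    ultimately show ?thesis
      by (metis min.absorb1 take_is_prefix take_take)
  qed
  moreover have "take (d k) k \<in> positions t" if "k \<in> internal_nodes t" for k
    using that internal_nodes_subset_positions positions_prefix_closed take_is_prefix by blast
  ultimately show ?thesis
    unfolding matching_histories_def
    by (auto intro: prefix_order.trans[OF take_is_prefix])
qed

lemma take_length_prefix: "prefix xs ys \<Longrightarrow> take (length xs) ys = xs"
  by (auto simp: prefix_def)

lemma bij_histories_depth_maps: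
  "bij_betw (\<lambda>h. restrict (\<lambda>k. length (h k)) (internal_nodes t))
     (matching_histories t) (depth_maps t 0)"
proof (rule bij_betw_byWitness[where f' = "\<lambda>d. restrict (\<lambda>k. take (d k) k) (internal_nodes t)"])
  show "\<forall>h\<in>matching_histories t.
      restrict (\<lambda>k. take (restrict (\<lambda>k. length (h k)) (internal_nodes t) k) k) (internal_nodes t) = h"
  proof (intro ballI ext)
    fix h k
    assume h: "h \<in> matching_histories t"
    show "restrict (\<lambda>k. take (restrict (\<lambda>k. length (h k)) (internal_nodes t) k) k) (internal_nodes t) k = h k"
    proof (cases "k \<in> internal_nodes t")
      case True
      then show ?thesis
        using history_below_node[OF h True] by (simp add: take_length_prefix)
    next
      case False
      with h show ?thesis
        by (simp add: matching_histories_def PiE_def extensional_def)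
    qed
  qed
  show "\<forall>d\<in>depth_maps t 0.
      restrict (\<lambda>k. length (restrict (\<lambda>k. take (d k) k) (internal_nodes t) k)) (internal_nodes t) = d"
    by (intro ballI ext) (auto simp: depth_maps_def PiE_def extensional_def min_def)
  show "(\<lambda>h. restrict (\<lambda>k. length (h k)) (internal_nodes t)) ` matching_histories t
      \<subseteq> depth_maps t 0"
    using history_depths_in_depth_maps by blast
  show "(\<lambda>d. restrict (\<lambda>k. take (d k) k) (internal_nodes t)) ` depth_maps t 0
      \<subseteq> matching_histories t"
    using take_depths_in_histories by blast
qed

lemma finite_internal_nodes: "finite (internal_nodes t)"
  by (induction t) auto

lemma finite_depth_maps: "finite (depth_maps t a)"
proof (rule finite_subset)
  show "depth_maps t a \<subseteq> PiE (internal_nodes t) (\<lambda>k. {..length k + a})"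
    unfolding depth_maps_def by auto
qed (simp add: finite_internal_nodes finite_PiE)

lemma Cons_in_internal_nodes_Node:
  "b # k \<in> internal_nodes (Node l r) \<longleftrightarrow> k \<in> internal_nodes (if b then r else l)"
  by (cases b) auto

lemma depth_maps_undefined: "d \<in> depth_maps t a \<Longrightarrow> k \<notin> internal_nodes t \<Longrightarrow> d k = undefined"
  unfolding depth_maps_def by (auto intro: PiE_arb)

definition join_depths ::
    "nat \<Rightarrow> (bool list \<Rightarrow> nat) \<Rightarrow> (bool list \<Rightarrow> nat) \<Rightarrow> 'a stree \<Rightarrow> 'a stree \<Rightarrow> bool list \<Rightarrow> nat"
  where "join_depths v dl dr l r = restrict
    (\<lambda>k. case k of [] \<Rightarrow> v | b # k' \<Rightarrow> (if b then dr k' else dl k') + v)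
    (internal_nodes (Node l r))"

lemma join_depths_Nil [simp]: "join_depths v dl dr l r [] = v"
  by (simp add: join_depths_def)

lemma join_depths_Cons [simp]:
  "join_depths v dl dr l r (b # k) =
    (if k \<in> internal_nodes (if b then r else l) then (if b then dr k else dl k) + v else undefined)"
  unfolding join_depths_def by (simp only: restrict_apply Cons_in_internal_nodes_Node) simp

lemma join_depths_in_depth_maps:
  assumes "v \<le> a" "dl \<in> depth_maps l (a + 1 - v)" "dr \<in> depth_maps r (a + 1 - v)"
  shows "join_depths v dl dr l r \<in> depth_maps (Node l r) a"
  unfolding depth_maps_def
proof (intro CollectI conjI ballI impI)
  show "join_depths v dl dr l r \<in> internal_nodes (Node l r) \<rightarrow>\<^sub>E UNIV"
    by (simp add: join_depths_def)
next
  fix k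
  assume "k \<in> internal_nodes (Node l r)"
  with assms show "join_depths v dl dr l r k \<le> length k + a"
    by (cases k) (auto simp: depth_maps_def Cons_in_internal_nodes_Node split: if_splits)
next
  fix k1 k2
  assume k: "k1 \<in> internal_nodes (Node l r)" "k2 \<in> internal_nodes (Node l r)" "prefix k1 k2"
  show "join_depths v dl dr l r k1 \<le> join_depths v dl dr l r k2"
  proof (cases k1)
    case Nil
    with k show ?thesis
      by (cases k2) (auto simp: Cons_in_internal_nodes_Node)
  next
    case (Cons b k1')
    with k(3) obtain k2' where "k2 = b # k2'" "prefix k1' k2'"
      by (cases k2) auto
    with k Cons assms(2,3) show ?thesis
      by (cases b) (auto simp: depth_maps_def)
  qed
qed

lemma subtree_depths_in_depth_maps:
  assumes "d \<in> depth_maps (Node l r) a" "s = (if b then r else l)"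
  shows "restrict (\<lambda>k. d (b # k) - d []) (internal_nodes s) \<in> depth_maps s (a + 1 - d [])"
proof -
  let ?I = "internal_nodes (Node l r)"
  have sub: "b # k \<in> ?I" if "k \<in> internal_nodes s" for k
    using that assms(2) by (simp only: Cons_in_internal_nodes_Node)
  have bound: "\<And>k. k \<in> ?I \<Longrightarrow> d k \<le> length k + a"
    and mono: "\<And>k1 k2. k1 \<in> ?I \<Longrightarrow> k2 \<in> ?I \<Longrightarrow> prefix k1 k2 \<Longrightarrow> d k1 \<le> d k2"
    using assms(1) unfolding depth_maps_def by auto
  have "d [] \<le> a"
    using bound[of "[]"] by simp
  show ?thesis
    unfolding depth_maps_def
  proof (intro CollectI conjI ballI impI)
    fix k
    assume "k \<in> internal_nodes s"
    with \<open>d [] \<le> a\<close> bound[OF sub] show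
      "restrict (\<lambda>k. d (b # k) - d []) (internal_nodes s) k \<le> length k + (a + 1 - d [])"
      by fastforce
  next
    fix k1 k2
    assume "k1 \<in> internal_nodes s" "k2 \<in> internal_nodes s" "prefix k1 k2"
    with mono[OF sub sub] show "restrict (\<lambda>k. d (b # k) - d []) (internal_nodes s) k1
      \<le> restrict (\<lambda>k. d (b # k) - d []) (internal_nodes s) k2"
      by (simp add: diff_le_mono)
  qed simp
qed

lemma bij_depth_maps_Node:
  "bij_betw (\<lambda>(v, dl, dr). join_depths v dl dr l r)
     (SIGMA v:{..a}. depth_maps l (a + 1 - v) \<times> depth_maps r (a + 1 - v))
     (depth_maps (Node l r) a)"
proof -
  let ?S = "SIGMA v:{..a}. depth_maps l (a + 1 - v) \<times> depth_maps r (a + 1 - v)"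
  let ?D = "depth_maps (Node l r) a"
  let ?join = "\<lambda>(v, dl, dr). join_depths v dl dr l r"
  let ?split = "\<lambda>d. (d [], restrict (\<lambda>k. d (False # k) - d []) (internal_nodes l),
    restrict (\<lambda>k. d (True # k) - d []) (internal_nodes r))"
  have "\<forall>x\<in>?S. ?split (?join x) = x"
  proof
    fix x
    assume "x \<in> ?S"
    then obtain v dl dr where x: "x = (v, dl, dr)"
      and "dl \<in> depth_maps l (a + 1 - v)" "dr \<in> depth_maps r (a + 1 - v)"
      by auto
    then have "restrict (\<lambda>k. join_depths v dl dr l r (False # k) - v) (internal_nodes l) = dl"
      and "restrict (\<lambda>k. join_depths v dl dr l r (True # k) - v) (internal_nodes r) = dr"
      by (auto simp: depth_maps_undefined)
    with x show "?split (?join x) = x"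
      by simp
  qed
  moreover have "\<forall>d\<in>?D. ?join (?split d) = d"
  proof (intro ballI ext)
    fix d k
    assume d: "d \<in> ?D"
    show "?join (?split d) k = d k"
    proof (cases k)
      case Nil
      then show ?thesis by simp
    next
      case (Cons b k')
      show ?thesis
      proof (cases "k \<in> internal_nodes (Node l r)")
        case True
        then have "d [] \<le> d k"
          using d unfolding depth_maps_def by auto
        moreover have "k' \<in> internal_nodes (if b then r else l)"
          using True Cons Cons_in_internal_nodes_Node by blast
        ultimately show ?thesis
          using Cons by (cases b) auto
      next
        case False
        then have "k' \<notin> internal_nodes (if b then r else l)"
          using Cons Cons_in_internal_nodes_Node by blast
        with False d Cons show ?thesis
          by (simp add: depth_maps_undefined)
      qed
    qed
  qed
  moreover have "?join ` ?S \<subseteq> ?D"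
    using join_depths_in_depth_maps by fastforce
  moreover have "?split ` ?D \<subseteq> ?S"
  proof (rule image_subsetI)
    fix d
    assume d: "d \<in> ?D"
    have "d [] \<le> a"
      using d unfolding depth_maps_def by fastforce
    with subtree_depths_in_depth_maps[OF d refl, where b = False]
      subtree_depths_in_depth_maps[OF d refl, where b = True] show "?split d \<in> ?S"
      by auto
  qed
  ultimately show ?thesis
    by (rule bij_betw_byWitness)
qed

fun depth_count :: "'a stree \<Rightarrow> nat \<Rightarrow> nat" where
  "depth_count (Leaf x) a = 1"
| "depth_count (Node l r) a = (\<Sum>v\<le>a. depth_count l (a + 1 - v) * depth_count r (a + 1 - v))"

lemma card_depth_maps: "card (depth_maps t a) = depth_count t a"
proof (induction t arbitrary: a)
  case (Leaf x)
  have "depth_maps (Leaf x) a = {\<lambda>_. undefined}"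
    unfolding depth_maps_def by auto
  then show ?case by simp
next
  case (Node l r)
  have "card (depth_maps (Node l r) a)
      = card (SIGMA v:{..a}. depth_maps l (a + 1 - v) \<times> depth_maps r (a + 1 - v))"
    by (rule bij_betw_same_card[OF bij_depth_maps_Node, symmetric])
  also have "\<dots> = (\<Sum>v\<le>a. card (depth_maps l (a + 1 - v)) * card (depth_maps r (a + 1 - v)))"
    by (simp add: finite_depth_maps card_cartesian_product)
  finally show ?case
    by (simp add: Node.IH)
qed

lemma num_mch_eq_depth_count: "num_mch t = depth_count t 0"
  unfolding num_mch_def
  using bij_betw_same_card[OF bij_histories_depth_maps] card_depth_maps by metis

lemma depth_count_Node_Suc:
  "depth_count (Node l r) (Suc a)
     = depth_count l (a + 2) * depth_count r (a + 2) + depth_count (Node l r) a"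
  unfolding depth_count.simps by (subst sum.atMost_Suc_shift) simp

fun caterpillar :: "nat \<Rightarrow> nat stree" where
  "caterpillar 0 = Leaf 0"
| "caterpillar (Suc n) = Node (caterpillar n) (Leaf (Suc n))"

lemma depth_count_caterpillar:
  "depth_count (caterpillar (Suc n)) a + (2 * n + 2 + a choose n) = 2 * n + 2 + a choose Suc n"
proof (induction n arbitrary: a)
  case 0
  show ?case by simp
next
  case (Suc n)
  note IH_n = Suc.IH
  show ?case
  proof (induction a)
    case 0
    have "depth_count (caterpillar (Suc (Suc n))) 0 = depth_count (caterpillar (Suc n)) 1"
      by simp
    moreover have "2 * n + 3 choose Suc (Suc n) = 2 * n + 3 choose Suc n"
      using binomial_symmetric[of "Suc (Suc n)" "2 * n + 3"] by simp
    ultimately show ?case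
      using IH_n[of 1] binomial_Suc_Suc[of "2 * n + 3" n] binomial_Suc_Suc[of "2 * n + 3" "Suc n"]
      by (simp add: numeral_eq_Suc del: binomial_Suc_Suc)
  next
    case (Suc a)
    let ?M = "2 * n + 4 + a"
    have "depth_count (caterpillar (Suc (Suc n))) (Suc a)
        = depth_count (caterpillar (Suc n)) (a + 2) + depth_count (caterpillar (Suc (Suc n))) a"
      by (simp only: caterpillar.simps(2) depth_count_Node_Suc depth_count.simps(1) mult_1_right)
    then show ?case
      using Suc.IH IH_n[of "a + 2"] binomial_Suc_Suc[of ?M n] binomial_Suc_Suc[of ?M "Suc n"]
      by (simp add: numeral_eq_Suc del: binomial_Suc_Suc)
  qed
qed

lemma catalan_depth_count_caterpillar:
  "(n + 1) * depth_count (caterpillar n) 0 = 2 * n choose n"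
proof (cases n)
  case (Suc n')
  let ?c = "depth_count (caterpillar (Suc n')) 0"
  have ballot: "?c + (2 * n' + 2 choose n') = 2 * n' + 2 choose Suc n'"
    using depth_count_caterpillar[of n' 0] by simp
  have "(n' + 2) * (2 * n' + 2 choose n') = (n' + 1) * (2 * n' + 2 choose Suc n')"
    by (metis Suc_eq_plus1 Suc_times_binomial_add add_2_eq_Suc' left_add_twice)
  then have "(n' + 2) * ?c + (n' + 1) * (2 * n' + 2 choose Suc n')
      = (n' + 2) * (2 * n' + 2 choose Suc n')"
    using ballot by (metis add_mult_distrib2)
  with Suc show ?thesis
    by simp
qed simp

lemma catalan_depth_count_caterpillar_le:
  "(2 * k + 1) * depth_count (caterpillar (2 * k)) 0 \<le> 16 ^ k"
  using catalan_depth_count_caterpillar[of "2 * k"] binomial_le_pow2[of "4 * k" "2 * k"]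
  by (simp add: power_mult)

fun cherry_caterpillar :: "nat \<Rightarrow> nat stree" where
  "cherry_caterpillar 0 = Leaf 0"
| "cherry_caterpillar (Suc j) =
     Node (Node (Leaf (2 * j + 1)) (Leaf (2 * j + 2))) (cherry_caterpillar j)"

lemma pochhammer_Suc_shift:
  "pochhammer (z + 1) (Suc m) = pochhammer z (Suc m) + of_nat (Suc m) * pochhammer (z + 1) m"
  by (simp only: pochhammer_Suc[of "z + 1"] pochhammer_rec[of z]) (simp add: algebra_simps)

lemma pochhammer_le_depth_count_cherry_caterpillar:
  "pochhammer (a + 1) (2 * j) \<le> 2 ^ j * fact j * depth_count (cherry_caterpillar j) a"
proof (induction j arbitrary: a)
  case 0
  show ?case by simp
next
  case (Suc j)
  note IH_j = Suc.IH
  show ?case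
  proof (induction a)
    case 0
    have "pochhammer (0 + 1 :: nat) (2 * Suc j) = (2 * j + 2) * pochhammer (1 + 1) (2 * j)"
      using pochhammer_Suc[of "1::nat" "Suc (2 * j)"] pochhammer_rec[of "1::nat" "2 * j"]
      by (simp add: numeral_2_eq_2 algebra_simps)
    also have "\<dots> \<le> (2 * j + 2) * (2 ^ j * fact j * depth_count (cherry_caterpillar j) 1)"
      using IH_j[of 1] by (rule mult_le_mono2)
    also have "\<dots> \<le> 2 ^ Suc j * fact (Suc j) * depth_count (cherry_caterpillar (Suc j)) 0"
      by (simp add: algebra_simps)
    finally show ?case .
  next
    case (Suc a)
    have "pochhammer (Suc a + 1) (2 * Suc j)
        = pochhammer (a + 1) (2 * Suc j) + (2 * j + 2) * (a + 2) * pochhammer (a + 3) (2 * j)"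
      using pochhammer_Suc_shift[of "a + 1" "Suc (2 * j)"] pochhammer_rec[of "a + 2" "2 * j"]
      by (simp add: numeral_eq_Suc algebra_simps)
    also have "\<dots> \<le> 2 ^ Suc j * fact (Suc j) * depth_count (cherry_caterpillar (Suc j)) a
        + (2 * j + 2) * (a + 3) * (2 ^ j * fact j * depth_count (cherry_caterpillar j) (a + 2))"
      using Suc.IH IH_j[of "a + 2"] by (intro add_mono mult_mono) (auto simp: numeral_eq_Suc)
    also have "\<dots> = 2 ^ Suc j * fact (Suc j) * depth_count (cherry_caterpillar (Suc j)) (Suc a)"
      by (simp only: cherry_caterpillar.simps depth_count_Node_Suc) (simp add: algebra_simps)
    finally show ?case .
  qed
qed

fun odd_fact :: "nat \<Rightarrow> nat" where
  "odd_fact 0 = 1"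
| "odd_fact (Suc k) = (2 * k + 1) * odd_fact k"

lemma fact_double: "fact (2 * k) = 2 ^ k * fact k * odd_fact k"
proof (induction k)
  case (Suc k)
  have "fact (2 * Suc k) = (2 * k + 2) * (2 * k + 1) * fact (2 * k)"
    by (simp add: algebra_simps)
  with Suc.IH show ?case
    by (simp add: algebra_simps)
qed simp

lemma one_plus_inverse_power_le:
  assumes "k \<ge> 1"
  shows "(1 + 1 / real k) ^ (2 * k) \<le> exp 1 ^ 2"
proof -
  have "(1 + 2 / real (2 * k)) ^ (2 * k) \<le> exp 2"
    by (rule exp_ge_one_plus_x_over_n_power_n) (use assms in auto)
  moreover have "exp (2::real) = exp 1 ^ 2"
    using exp_of_nat_mult[of 2 "1::real"] by simp
  ultimately show ?thesis
    by simp
qed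

lemma odd_fact_lower_bound:
  "k \<ge> 1 \<Longrightarrow> exp 1 ^ 2 * (2 * real k / exp 1) ^ (2 * k) \<le> 4 * real k * real (odd_fact k) ^ 2"
proof (induction k rule: dec_induct)
  case base
  show ?case by (simp add: power2_eq_square)
next
  case (step k)
  let ?E = "exp 1 :: real"
  have k: "real k \<ge> 1"
    using step.hyps by simp
  have "2 * real (Suc k) / ?E = (2 * real k / ?E) * (1 + 1 / real k)"
    using k by (simp add: field_simps)
  then have "(2 * real (Suc k) / ?E) ^ (2 * k) = (2 * real k / ?E) ^ (2 * k) * (1 + 1 / real k) ^ (2 * k)"
    by (simp only: power_mult_distrib)
  also have "\<dots> \<le> (2 * real k / ?E) ^ (2 * k) * ?E ^ 2"
    using one_plus_inverse_power_le[OF step.hyps(1)] by (rule mult_left_mono) simp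
  finally have grow: "(2 * real (Suc k) / ?E) ^ (2 * k) \<le> (2 * real k / ?E) ^ (2 * k) * ?E ^ 2" .
  have "?E ^ 2 * (2 * real (Suc k) / ?E) ^ (2 * Suc k)
      = ?E ^ 2 * (2 * real (Suc k) / ?E) ^ (2 * k) * (2 * real (Suc k) / ?E) ^ 2"
    by (simp only: mult.assoc power_add[symmetric]) simp
  also have "\<dots> \<le> ?E ^ 2 * ((2 * real k / ?E) ^ (2 * k) * ?E ^ 2) * (2 * real (Suc k) / ?E) ^ 2"
    using grow by (intro mult_right_mono mult_left_mono) auto
  also have "\<dots> = ?E ^ 2 * (2 * real k / ?E) ^ (2 * k) * (4 * (real k + 1) ^ 2)"
    by (simp add: field_simps power2_eq_square)
  also have "\<dots> \<le> 4 * real k * real (odd_fact k) ^ 2 * (4 * (real k + 1) ^ 2)"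
    using step.IH by (intro mult_right_mono) auto
  also have "\<dots> = (4 * real k * (4 * (real k + 1) ^ 2)) * real (odd_fact k) ^ 2"
    by (simp only: mult_ac)
  also have "\<dots> \<le> (4 * (real k + 1) * (2 * real k + 1) ^ 2) * real (odd_fact k) ^ 2"
    by (rule mult_right_mono) (simp_all add: power2_eq_square algebra_simps)
  also have "\<dots> = 4 * real (Suc k) * real (odd_fact (Suc k)) ^ 2"
    by (simp add: power2_eq_square algebra_simps)
  finally show ?case .
qed

lemma odd_fact_ratio_lower_bound:
  assumes "k \<ge> 1"
  shows "(sqrt (2 * real k) / (4 * sqrt (exp 1))) ^ (2 * k + 1)
    \<le> real (odd_fact k) * (2 * real k + 1) / 16 ^ k"
proof (rule power2_le_imp_le)
  let ?E = "exp 1 :: real" and ?F = "real (odd_fact k)"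
  let ?x = "sqrt (2 * real k) / (4 * sqrt ?E)" and ?q = "2 * real k / ?E"
  have "(?x ^ (2 * k + 1)) ^ 2 = (?x ^ 2) ^ (2 * k + 1)"
    by (simp only: power_even_eq[symmetric] power_mult)
  also have "?x ^ 2 = ?q / 16"
    by (simp add: power_divide power_mult_distrib)
  also have "(?q / 16) ^ (2 * k + 1) = ?q ^ (2 * k) / 16 ^ (2 * k) * (?q / 16)"
    by (simp only: power_add power_one_right power_divide)
  also have "\<dots> \<le> 4 * real k * ?F ^ 2 / ?E ^ 2 / 16 ^ (2 * k) * (?q / 16)"
  proof -
    have "?q ^ (2 * k) \<le> 4 * real k * ?F ^ 2 / ?E ^ 2"
      using odd_fact_lower_bound[OF assms] by (simp add: field_simps del: of_nat_mult)
    then show ?thesis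
      by (intro mult_right_mono divide_right_mono) auto
  qed
  also have "\<dots> = ?F ^ 2 / 16 ^ (2 * k) * (8 * real k ^ 2 / (16 * ?E ^ 3))"
    by (simp add: field_simps power2_eq_square power3_eq_cube)
  also have "\<dots> \<le> ?F ^ 2 / 16 ^ (2 * k) * (2 * real k + 1) ^ 2"
  proof (rule mult_left_mono)
    have "8 * real k ^ 2 \<le> 16 * 1 * (2 * real k + 1) ^ 2"
      by (simp add: power2_eq_square algebra_simps)
    also have "\<dots> \<le> 16 * ?E ^ 3 * (2 * real k + 1) ^ 2"
      by (intro mult_right_mono mult_left_mono) auto
    finally show "8 * real k ^ 2 / (16 * ?E ^ 3) \<le> (2 * real k + 1) ^ 2"
      by (simp add: divide_le_eq mult_ac)
  qed simp
  also have "\<dots> = (?F * (2 * real k + 1) / 16 ^ k) ^ 2"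
    by (simp only: power_divide power_mult_distrib power_even_eq times_divide_eq_left)
  finally show "(?x ^ (2 * k + 1)) ^ 2 \<le> (?F * (2 * real k + 1) / 16 ^ k) ^ 2" .
qed simp

lemma odd_fact_le_depth_count_cherry_caterpillar:
  "odd_fact k \<le> depth_count (cherry_caterpillar k) 0"
proof -
  have "pochhammer (0 + 1) (2 * k) \<le> 2 ^ k * fact k * depth_count (cherry_caterpillar k) 0"
    by (rule pochhammer_le_depth_count_cherry_caterpillar)
  then have "fact (2 * k) \<le> 2 ^ k * fact k * depth_count (cherry_caterpillar k) 0"
    by (simp only: add_0 pochhammer_fact[symmetric])
  then show ?thesis
    by (simp add: fact_double)
qed

lemma leaf_labels_caterpillar: "leaf_labels (caterpillar n) = [0..<Suc n]"
  by (induction n) auto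

lemma caterpillar_in_species_trees: "caterpillar n \<in> species_trees (Suc n)"
  by (simp add: species_trees_def nleaves_def leaf_labels_caterpillar)

lemma leaf_labels_cherry_caterpillar:
  "set (leaf_labels (cherry_caterpillar j)) \<subseteq> {..2 * j} \<and> distinct (leaf_labels (cherry_caterpillar j))"
  by (induction j) auto

lemma nleaves_cherry_caterpillar: "nleaves (cherry_caterpillar j) = 2 * j + 1"
  by (induction j) (auto simp: nleaves_def)

lemma cherry_caterpillar_in_species_trees: "cherry_caterpillar j \<in> species_trees (2 * j + 1)"
  using leaf_labels_cherry_caterpillar
  by (simp add: species_trees_def nleaves_cherry_caterpillar)

lemma depth_count_pos: "depth_count t a > 0"
  by (induction t arbitrary: a) (auto intro!: sum_pos2[where i = 0])

lemma nleaves_Node: "nleaves (Node l r) = nleaves l + nleaves r"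
  by (simp add: nleaves_def)

lemma nleaves_pos: "nleaves t > 0"
  by (induction t) (auto simp: nleaves_def)

lemma depth_count_le_power: "depth_count t a \<le> (a + nleaves t) ^ (2 * nleaves t - 1)"
proof (induction t arbitrary: a)
  case (Leaf x)
  then show ?case by (simp add: nleaves_def)
next
  case (Node l r)
  let ?n = "nleaves (Node l r)"
  have pos: "nleaves l > 0" "nleaves r > 0"
    using nleaves_pos by auto
  have IH: "depth_count s (a + 1 - v) \<le> (a + ?n) ^ (2 * nleaves s - 1)"
    if "s \<in> {l, r}" "v \<le> a" for s v
  proof -
    have "depth_count s (a + 1 - v) \<le> (a + 1 - v + nleaves s) ^ (2 * nleaves s - 1)"
      using that(1) Node.IH by blast
    also have "\<dots> \<le> (a + ?n) ^ (2 * nleaves s - 1)"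
      using that pos by (intro power_mono) (auto simp: nleaves_Node)
    finally show ?thesis .
  qed
  have "depth_count (Node l r) a
      \<le> (\<Sum>v\<le>a. (a + ?n) ^ (2 * nleaves l - 1) * (a + ?n) ^ (2 * nleaves r - 1))"
    unfolding depth_count.simps by (intro sum_mono mult_le_mono IH) auto
  also have "\<dots> = (a + 1) * ((a + ?n) ^ (2 * nleaves l - 1) * (a + ?n) ^ (2 * nleaves r - 1))"
    by simp
  also have "\<dots> \<le> (a + ?n) * ((a + ?n) ^ (2 * nleaves l - 1) * (a + ?n) ^ (2 * nleaves r - 1))"
    using pos by (intro mult_le_mono1) (simp add: nleaves_Node)
  also have "\<dots> = (a + ?n) ^ (1 + (2 * nleaves l - 1) + (2 * nleaves r - 1))"
    by (simp add: power_add)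
  also have "1 + (2 * nleaves l - 1) + (2 * nleaves r - 1) = 2 * ?n - 1"
    using pos by (simp add: nleaves_Node)
  finally show ?case .
qed

lemma finite_num_mch_image: "finite (num_mch ` species_trees m)"
proof (rule finite_subset)
  show "num_mch ` species_trees m \<subseteq> {..m ^ (2 * m - 1)}"
    using depth_count_le_power[of _ 0]
    by (auto simp: num_mch_eq_depth_count species_trees_def)
qed simp

lemma ratio_le_R:
  assumes "t \<in> species_trees m" "u \<in> species_trees m"
  shows "real (num_mch t) / real (num_mch u) \<le> R m"
proof -
  have "num_mch t \<le> h_plus m"
    unfolding h_plus_def using assms(1) finite_num_mch_image by (intro Max_ge) auto
  moreover have "h_minus m \<le> num_mch u"
    unfolding h_minus_def using assms(2) finite_num_mch_image by (intro Min_le) auto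
  moreover have "h_minus m \<in> num_mch ` species_trees m"
    unfolding h_minus_def using assms(2) finite_num_mch_image by (intro Min_in) auto
  then have "h_minus m > 0"
    using depth_count_pos by (auto simp: num_mch_eq_depth_count)
  ultimately show ?thesis
    unfolding R_def by (intro frac_le) auto
qed

theorem corollary2:
  fixes m :: nat
  assumes "odd m" and "m \<ge> 7"
  shows "R m \<ge> (sqrt (real m - 1) / (4 * sqrt (exp 1))) ^ m"
proof -
  obtain k where m: "m = 2 * k + 1"
    using assms(1) oddE by blast
  have k: "k \<ge> 1"
    using assms(2) m by simp
  let ?S = "depth_count (cherry_caterpillar k) 0" and ?C = "depth_count (caterpillar (2 * k)) 0"
  have "real ((2 * k + 1) * ?C) \<le> real ((16::nat) ^ k)"
    using catalan_depth_count_caterpillar_le[of k] by (rule of_nat_mono)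
  then have "real ?C \<le> 16 ^ k / (2 * real k + 1)"
    by (simp add: field_simps)
  have "(sqrt (real m - 1) / (4 * sqrt (exp 1))) ^ m
      \<le> real (odd_fact k) * (2 * real k + 1) / 16 ^ k"
    using odd_fact_ratio_lower_bound[OF k] m by simp
  also have "\<dots> = real (odd_fact k) / (16 ^ k / (2 * real k + 1))"
    by simp
  also have "\<dots> \<le> real ?S / real ?C"
    using odd_fact_le_depth_count_cherry_caterpillar[of k] depth_count_pos[of "caterpillar (2 * k)" 0]
      \<open>real ?C \<le> 16 ^ k / (2 * real k + 1)\<close>
    by (intro frac_le) auto
  also have "\<dots> \<le> R m"
    using ratio_le_R[of "cherry_caterpillar k" m "caterpillar (2 * k)"] m
      cherry_caterpillar_in_species_trees[of k] caterpillar_in_species_trees[of "2 * k"]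
    by (simp add: num_mch_eq_depth_count)
  finally show ?thesis .
qed

end
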